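(* Let $0<\delta<1$ and let $f(X)=N(N-1)\sum_{i=1}^{\ell}\beta_i\,t(H_i,X)$ be a subgraph-counting function. Then there exists a constant $C_\delta>0$, depending on $\delta$, the graphs $H_i$ and the weights $\beta_i$ but otherwise independent of $N$, such that for every $X\in\mathcal X_f$ there exists a block matrix $X^*$ with at most $C_\delta$ communities satisfying $$\|X-X^*\|_1\le \delta n+5000\,C_{\boldsymbol\beta}^2\,n^{15/16}.$$
   Context: Fix an integer $N\ge2$, $n=\binom N2$. Vectors $X\in[0,1]^n$ are identified with symmetric $N\times N$ matrices with zero diagonal, entries indexed by unordered pairs $\{i,j\}$, $i\ne j$. For a finite simple graph $H$ on $[m]$, $t(H,X)=\frac{1}{N(N-1)\cdots(N-m+1)}\sum_{q}\prod_{\{l,l'\}\in E(H)}X_{q_lq_{l'}}$, summing over injective $q:[m]\to[N]$. For an edge index $e$, $\partial_ef(X)=\frac12(f(X^{e\leftarrow1})-f(X^{e\leftarrow0}))$ ($X^{e\leftarrow a}$: coordinate $e$ replaced by $a$), $\nabla f(X)=(\partial_ef(X))_e$. $\mathbf 1$ is the matrix with zero diagonal and off-diagonal entries $1$; $\tanh$ acts entrywise; $\|\cdot\|_1$ is the entrywise $\ell^1$ norm. $C_{\boldsymbol\beta}=\max\{12\sum_i|\beta_i||E(H_i)|^2,2\}$ and $\mathcal X_f=\{X\in[0,1]^n:\|X-\frac{\mathbf 1+\tanh(\nabla f(X))}{2}\|_1\le5000C_{\boldsymbol\beta}^2n^{15/16}\}$. A symmetric matrix $X^*\in\mathbb R^{N\times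 N}$ is a block matrix with $k$ communities if there exist a symmetric $P\in\mathbb R^{k\times k}$ and a partition of $[N]$ into disjoint sets $V_1,\dots,V_k$ (the communities) such that $X^*_{ij}=P_{\ell_1\ell_2}$ whenever $i\in V_{\ell_1}$, $j\in V_{\ell_2}$. *)

theory Defs
  imports Complex_Main
begin

text \<open>Unordered pairs {i,j}, i < j, of vertices in [N] = {0..<N}; these index
  the n = N choose 2 coordinates of X.\<close>
definition pairs :: "nat \<Rightarrow> nat set set" where
  "pairs N = {e. \<exists>i j. i < j \<and> j < N \<and> e = {i, j}}"

definition simple_graph :: "nat \<Rightarrow> nat set set \<Rightarrow> bool" where
  "simple_graph m E \<longleftrightarrow> E \<subseteq> pairs m"

definition inj_maps :: "nat \<Rightarrow> nat \<Rightarrow> (nat \<Rightarrow> nat) set" where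
  "inj_maps m N = {q. (\<forall>l<m. q l < N) \<and> inj_on q {..<m} \<and> (\<forall>l\<ge>m. q l = 0)}"

definition tdens :: "nat \<Rightarrow> nat set set \<Rightarrow> nat \<Rightarrow> (nat set \<Rightarrow> real) \<Rightarrow> real" where
  "tdens m E N X = (1 / (\<Prod>r<m. real N - real r)) *
      (\<Sum>q\<in>inj_maps m N. \<Prod>e\<in>E. X (q ` e))"

definition fsub :: "nat \<Rightarrow> (nat \<Rightarrow> nat) \<Rightarrow> (nat \<Rightarrow> nat set set) \<Rightarrow> (nat \<Rightarrow> real)
    \<Rightarrow> nat \<Rightarrow> (nat set \<Rightarrow> real) \<Rightarrow> real" where
  "fsub L m E \<beta> N X = real N * (real N - 1) * (\<Sum>i<L. \<beta> i * tdens (m i) (E i) N X)"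

definition pderiv_e :: "((nat set \<Rightarrow> real) \<Rightarrow> real) \<Rightarrow> nat set \<Rightarrow> (nat set \<Rightarrow> real) \<Rightarrow> real" where
  "pderiv_e f e X = (f (X(e := 1)) - f (X(e := 0))) / 2"


definition Cbeta :: "nat \<Rightarrow> (nat \<Rightarrow> nat set set) \<Rightarrow> (nat \<Rightarrow> real) \<Rightarrow> real" where
  "Cbeta L E \<beta> = max (12 * (\<Sum>i<L. \<bar>\<beta> i\<bar> * real (card (E i)) ^ 2)) 2"

text \<open>The set \<X>_f of near-fixed points of the mean-field equation, for a given N.\<close>
definition Xf :: "nat \<Rightarrow> (nat \<Rightarrow> nat) \<Rightarrow> (nat \<Rightarrow> nat set set) \<Rightarrow> (nat \<Rightarrow> real)
    \<Rightarrow> nat \<Rightarrow> (nat set \<Rightarrow> real) set" where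
  "Xf L m E \<beta> N = {X. (\<forall>e\<in>pairs N. 0 \<le> X e \<and> X e \<le> 1) \<and>
      (\<Sum>e\<in>pairs N. \<bar>X e - (1 + tanh (pderiv_e (fsub L m E \<beta> N) e X)) / 2\<bar>)
        \<le> 5000 * Cbeta L E \<beta> ^ 2 * real (N choose 2) powr (15/16)}"

definition block_matrix :: "nat \<Rightarrow> nat \<Rightarrow> (nat \<Rightarrow> nat \<Rightarrow> real) \<Rightarrow> bool" where
  "block_matrix N k Xs \<longleftrightarrow>
     (\<exists>P :: nat \<Rightarrow> nat \<Rightarrow> real. \<exists>V :: nat \<Rightarrow> nat set.
        (\<forall>a<k. \<forall>b<k. P a b = P b a) \<and>
        (\<forall>a<k. \<forall>b<k. a \<noteq> b \<longrightarrow> V a \<inter> V b = {}) \<and>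
        (\<Union>a<k. V a) = {..<N} \<and>
        (\<forall>a<k. \<forall>b<k. \<forall>i\<in>V a. \<forall>j\<in>V b. Xs i j = P a b))"

definition dist1 :: "nat \<Rightarrow> (nat set \<Rightarrow> real) \<Rightarrow> (nat \<Rightarrow> nat \<Rightarrow> real) \<Rightarrow> real" where
  "dist1 N X Xs = (\<Sum>(i, j)\<in>{(i, j). i < j \<and> j < N}. \<bar>X {i, j} - Xs i j\<bar>)"

end

theory Submission
  imports Defs "HOL-Library.FuncSet"
begin

text \<open>The discrete gradient of \<open>f\<close> at a pair \<open>{i, j}\<close> counts the embeddings of the \<open>H\<^sub>k\<close> that
  send some edge onto \<open>{i, j}\<close>. Fixing the edge and the images of the remaining vertices, the
  contribution factors into a term depending only on \<open>i\<close> and one depending only on \<open>j\<close>, so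
  \<open>\<nabla>f\<close> is a weighted sum of rank-one matrices with entries in \<open>[-1, 1]\<close>, whose total weight is
  bounded independently of \<open>N\<close> thanks to the falling-factorial normalisation. Maurey's empirical
  method replaces this sum by an average of \<open>s = O(B\<^sup>2/\<delta>\<^sup>2)\<close> of its terms, with \<open>\<ell>\<^sup>1\<close> error
  \<open>\<delta> N\<^sup>2/2\<close>; rounding the factors to a grid of mesh \<open>1/M\<close> then makes the approximation a
  function of the rounded profiles of \<open>i\<close> and \<open>j\<close>, of which there are at most \<open>(2M+1)\<^sup>2\<^sup>s\<close>.
  Grouping vertices by profile gives the communities: as \<open>X\<close> is close to
  \<open>(1 + tanh \<nabla>f)/2\<close> and \<open>tanh\<close> is 1-Lipschitz, \<open>X\<close> is close to the block matrix obtained by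
  applying the same map to the approximation.\<close>

lemma tanh_real_dist_le: "\<bar>tanh (x::real) - tanh y\<bar> \<le> \<bar>x - y\<bar>"
proof -
  have mono: "0 \<le> tanh b - tanh a \<and> tanh b - tanh a \<le> b - a" if "a < b" for a b :: real
  proof -
    have "\<And>x. a \<le> x \<Longrightarrow> x \<le> b \<Longrightarrow> DERIV tanh x :> 1 - tanh x ^ 2"
      using has_field_derivative_tanh[OF cosh_real_nonzero DERIV_ident] by simp
    from MVT2[OF that this] obtain z where z: "tanh b - tanh a = (b - a) * (1 - tanh z ^ 2)"
      by blast
    have "tanh z ^ 2 \<le> 1"
      using tanh_real_bounds[of z] by (auto simp: abs_square_le_1)
    then show ?thesis
      using that unfolding z by (simp add: mult_le_cancel_left1)
  qed
  show ?thesis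
    by (cases x y rule: linorder_cases) (use mono[of x y] mono[of y x] in auto)
qed

lemma abs_le_sq_div_add: "(c::real) > 0 \<Longrightarrow> \<bar>x\<bar> \<le> x\<^sup>2 / (2 * c) + c / 2"
proof -
  assume c: "c > 0"
  have "0 \<le> (\<bar>x\<bar> - c)\<^sup>2" by simp
  then have "2 * c * \<bar>x\<bar> \<le> x\<^sup>2 + c\<^sup>2" by (simp add: power2_eq_square algebra_simps)
  then show ?thesis using c by (simp add: field_simps power2_eq_square)
qed

lemma abs_mult_diff_le:
  fixes x y x' y' h :: real
  assumes "\<bar>x\<bar> \<le> 1" "\<bar>y\<bar> \<le> 1" "\<bar>x' - x\<bar> \<le> h" "\<bar>y' - y\<bar> \<le> h" "\<bar>x'\<bar> \<le> 1"
  shows "\<bar>x * y - x' * y'\<bar> \<le> 2 * h"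
proof -
  have "\<bar>x * y - x' * y'\<bar> = \<bar>(x - x') * y + x' * (y - y')\<bar>" by (simp add: algebra_simps)
  also have "\<dots> \<le> \<bar>x - x'\<bar> * \<bar>y\<bar> + \<bar>x'\<bar> * \<bar>y - y'\<bar>"
    by (simp add: abs_mult abs_triangle_ineq[THEN order_trans])
  also have "\<dots> \<le> h * 1 + 1 * h"
    using assms by (intro add_mono mult_mono) (auto simp: abs_minus_commute)
  finally show ?thesis by simp
qed

subsection \<open>Maurey's empirical method\<close>

lemma exists_le_weighted_average:
  fixes p f :: "'z \<Rightarrow> real"
  assumes "finite Z" "Z \<noteq> {}" "\<forall>z\<in>Z. p z \<ge> 0" "sum p Z = 1"
  shows "\<exists>z\<in>Z. f z \<le> (\<Sum>z\<in>Z. p z * f z)"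
proof -
  have "Min (f ` Z) \<in> f ` Z" using assms by (intro Min_in) auto
  then obtain z0 where z0: "z0 \<in> Z" "f z0 = Min (f ` Z)" by auto
  have "f z0 = (\<Sum>z\<in>Z. p z * f z0)" using assms(4) by (simp add: sum_distrib_right[symmetric])
  also have "\<dots> \<le> (\<Sum>z\<in>Z. p z * f z)"
    using assms z0 by (intro sum_mono mult_left_mono) auto
  finally show ?thesis using z0 by blast
qed

lemma weighted_sum_sq_shift:
  fixes p :: "'z \<Rightarrow> real"
  assumes "finite Z" "sum p Z = 1" "d = (\<Sum>z\<in>Z. p z * y z)"
  shows "(\<Sum>z\<in>Z. p z * (c + y z - d)\<^sup>2) = c\<^sup>2 + (\<Sum>z\<in>Z. p z * (y z - d)\<^sup>2)"
proof -
  have e: "\<And>z. p z * (c + y z - d)\<^sup>2 = p z * c\<^sup>2 + 2 * c * (p z * y z - p z * d) + p z * (y z - d)\<^sup>2"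
    by (simp add: power2_eq_square algebra_simps)
  have "(\<Sum>z\<in>Z. p z * (c + y z - d)\<^sup>2) = (\<Sum>z\<in>Z. p z) * c\<^sup>2
      + 2 * c * ((\<Sum>z\<in>Z. p z * y z) - (\<Sum>z\<in>Z. p z) * d) + (\<Sum>z\<in>Z. p z * (y z - d)\<^sup>2)"
    unfolding e
    by (simp add: sum.distrib sum_distrib_left[symmetric] sum_distrib_right sum_subtractf)
  then show ?thesis using assms by simp
qed

text \<open>Choosing the sample points one at a time, each new point can be taken at least as good as
  the average, and by the previous lemma the average increases the squared deviation by exactly
  the variance.\<close>
lemma exists_sample_sq_dev_le:
  fixes Z :: "'z set" and I :: "'i set" and p :: "'z \<Rightarrow> real" and Y :: "'z \<Rightarrow> 'i \<Rightarrow> real"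
  assumes fZ: "finite Z" and ne: "Z \<noteq> {}" and fI: "finite I" and p0: "\<forall>z\<in>Z. p z \<ge> 0"
    and p1: "sum p Z = 1" and D: "\<forall>\<iota>\<in>I. D \<iota> = (\<Sum>z\<in>Z. p z * Y z \<iota>)"
  shows "\<exists>\<zeta>. (\<forall>t<s. \<zeta> t \<in> Z) \<and> (\<Sum>\<iota>\<in>I. (\<Sum>t<s. Y (\<zeta> t) \<iota> - D \<iota>)\<^sup>2)
            \<le> real s * (\<Sum>z\<in>Z. p z * (\<Sum>\<iota>\<in>I. (Y z \<iota> - D \<iota>)\<^sup>2))"
proof (induction s)
  case 0
  then show ?case by simp
next
  case (Suc s)
  let ?V = "(\<Sum>z\<in>Z. p z * (\<Sum>\<iota>\<in>I. (Y z \<iota> - D \<iota>)\<^sup>2))"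
  from Suc obtain \<zeta> where \<zeta>: "\<forall>t<s. \<zeta> t \<in> Z"
    and IH: "(\<Sum>\<iota>\<in>I. (\<Sum>t<s. Y (\<zeta> t) \<iota> - D \<iota>)\<^sup>2) \<le> real s * ?V" by blast
  define c where "c \<iota> = (\<Sum>t<s. Y (\<zeta> t) \<iota> - D \<iota>)" for \<iota>
  define F where "F z = (\<Sum>\<iota>\<in>I. (c \<iota> + Y z \<iota> - D \<iota>)\<^sup>2)" for z
  have "(\<Sum>z\<in>Z. p z * F z) = (\<Sum>\<iota>\<in>I. \<Sum>z\<in>Z. p z * (c \<iota> + Y z \<iota> - D \<iota>)\<^sup>2)"
    unfolding F_def sum_distrib_left by (rule sum.swap)
  also have "\<dots> = (\<Sum>\<iota>\<in>I. (c \<iota>)\<^sup>2 + (\<Sum>z\<in>Z. p z * (Y z \<iota> - D \<iota>)\<^sup>2))"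
    using fZ p1 D by (intro sum.cong refl weighted_sum_sq_shift) auto
  also have "\<dots> = (\<Sum>\<iota>\<in>I. (c \<iota>)\<^sup>2) + ?V"
    by (simp add: sum.distrib sum_distrib_left sum.swap[of _ Z I])
  finally have avg: "(\<Sum>z\<in>Z. p z * F z) = (\<Sum>\<iota>\<in>I. (c \<iota>)\<^sup>2) + ?V" .
  obtain z where zZ: "z \<in> Z" and zF: "F z \<le> (\<Sum>z\<in>Z. p z * F z)"
    using exists_le_weighted_average[OF fZ ne p0 p1] by blast
  have "(\<Sum>t<Suc s. Y ((\<zeta>(s := z)) t) \<iota> - D \<iota>) = c \<iota> + Y z \<iota> - D \<iota>" for \<iota>
    unfolding c_def by simp
  then have "(\<Sum>\<iota>\<in>I. (\<Sum>t<Suc s. Y ((\<zeta>(s := z)) t) \<iota> - D \<iota>)\<^sup>2) = F z"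
    unfolding F_def by (simp del: sum.lessThan_Suc)
  also have "\<dots> \<le> real (Suc s) * ?V"
    using zF avg IH c_def by (simp add: algebra_simps)
  finally show ?case
    using \<zeta> zZ by (intro exI[of _ "\<zeta>(s := z)"]) (auto simp: less_Suc_eq)
qed

lemma abs_sum_rank_one_le:
  fixes w a g :: "'z \<Rightarrow> real"
  assumes "finite Z" "\<forall>z. \<bar>a z\<bar> \<le> 1 \<and> \<bar>g z\<bar> \<le> 1"
  shows "\<bar>\<Sum>z\<in>Z. w z * a z * g z\<bar> \<le> (\<Sum>z\<in>Z. \<bar>w z\<bar>)"
proof -
  have "\<bar>\<Sum>z\<in>Z. w z * a z * g z\<bar> \<le> (\<Sum>z\<in>Z. \<bar>w z\<bar> * (\<bar>a z\<bar> * \<bar>g z\<bar>))"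
    by (rule order_trans[OF sum_abs]) (simp add: abs_mult mult.assoc)
  also have "\<dots> \<le> (\<Sum>z\<in>Z. \<bar>w z\<bar> * 1)"
    using assms by (intro sum_mono mult_left_mono mult_le_one) auto
  finally show ?thesis by simp
qed

text \<open>The empirical method for a sum of rank-one products: sampling \<open>z\<close> with probability
  proportional to \<open>\<bar>w z\<bar>\<close>, each sample is an unbiased estimator with entries bounded by
  \<open>W = \<Sum>\<bar>w\<bar>\<close>.\<close>
lemma exists_sample_rank_one_sq_dev_le:
  fixes w :: "'z \<Rightarrow> real" and a g :: "nat \<Rightarrow> 'z \<Rightarrow> real"
  assumes fZ: "finite Z" and ag: "\<forall>i z. \<bar>a i z\<bar> \<le> 1 \<and> \<bar>g i z\<bar> \<le> 1"
  defines "W \<equiv> \<Sum>z\<in>Z. \<bar>w z\<bar>"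
  shows "\<exists>\<zeta>. (\<Sum>i<N. \<Sum>j<N. ((\<Sum>t<s. W * sgn (w (\<zeta> t)) * a i (\<zeta> t) * g j (\<zeta> t))
      - s * (\<Sum>z\<in>Z. w z * a i z * g j z))\<^sup>2) \<le> real s * (real N ^ 2 * (4 * W\<^sup>2))"
proof (cases "W = 0")
  case True
  then have "\<forall>z\<in>Z. w z = 0" using fZ unfolding W_def by (simp add: sum_nonneg_eq_0_iff)
  then show ?thesis using True by simp
next
  case False
  then have Wp: "W > 0" unfolding W_def by (simp add: order_less_le)
  have Zne: "Z \<noteq> {}" using False unfolding W_def by auto
  define p where "p z = \<bar>w z\<bar> / W" for z
  define I where "I = {..<N} \<times> {..<N}"
  define Y where "Y z \<iota> = W * sgn (w z) * a (fst \<iota>) z * g (snd \<iota>) z" for z \<iota>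
  define D where "D \<iota> = (\<Sum>z\<in>Z. w z * a (fst \<iota>) z * g (snd \<iota>) z)" for \<iota>
  have p0: "\<forall>z\<in>Z. p z \<ge> 0" unfolding p_def using Wp by simp
  have p1: "sum p Z = 1" unfolding p_def using Wp by (simp add: sum_divide_distrib[symmetric] W_def)
  have "p z * Y z \<iota> = (\<bar>w z\<bar> * sgn (w z)) * a (fst \<iota>) z * g (snd \<iota>) z" for z \<iota>
    unfolding p_def Y_def using Wp by (simp add: field_simps)
  then have DY: "\<forall>\<iota>\<in>I. D \<iota> = (\<Sum>z\<in>Z. p z * Y z \<iota>)" unfolding D_def by (simp add: abs_mult_sgn)
  obtain \<zeta> where \<zeta>: "(\<Sum>\<iota>\<in>I. (\<Sum>t<s. Y (\<zeta> t) \<iota> - D \<iota>)\<^sup>2)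
      \<le> real s * (\<Sum>z\<in>Z. p z * (\<Sum>\<iota>\<in>I. (Y z \<iota> - D \<iota>)\<^sup>2))"
    using exists_sample_sq_dev_le[OF fZ Zne _ p0 p1 DY] unfolding I_def by blast
  have Yb: "\<bar>Y z \<iota>\<bar> \<le> W" for z \<iota>
    using ag Wp unfolding Y_def by (auto simp: abs_mult abs_sgn_eq intro!: mult_le_one)
  have Db: "\<bar>D \<iota>\<bar> \<le> W" for \<iota>
    unfolding D_def W_def using abs_sum_rank_one_le[OF fZ] ag by blast
  have "\<bar>Y z \<iota> - D \<iota>\<bar> \<le> \<bar>2 * W\<bar>" for z \<iota>
    using Yb[of z \<iota>] Db[of \<iota>] by linarith
  then have "(\<Sum>z\<in>Z. p z * (\<Sum>\<iota>\<in>I. (Y z \<iota> - D \<iota>)\<^sup>2)) \<le> (\<Sum>z\<in>Z. p z * (\<Sum>\<iota>\<in>I. (2 * W)\<^sup>2))"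
    using p0 by (intro sum_mono mult_left_mono) (auto simp only: abs_le_square_iff)
  also have "\<dots> = real N ^ 2 * (4 * W\<^sup>2)"
    using p1 unfolding I_def by (simp add: sum_distrib_right[symmetric] power2_eq_square)
  finally have "(\<Sum>\<iota>\<in>I. (\<Sum>t<s. Y (\<zeta> t) \<iota> - D \<iota>)\<^sup>2) \<le> real s * (real N ^ 2 * (4 * W\<^sup>2))"
    using \<zeta> by (meson order_trans mult_left_mono of_nat_0_le_iff)
  then show ?thesis
    unfolding I_def Y_def D_def by (intro exI[of _ \<zeta>]) (simp add: sum.cartesian_product sum_subtractf split_def)
qed

lemma sum_abs_le_sum_sq:
  fixes e :: "'i \<Rightarrow> real"
  assumes "\<epsilon> > 0"
  shows "(\<Sum>\<iota>\<in>I. \<bar>e \<iota>\<bar>) \<le> (\<Sum>\<iota>\<in>I. (e \<iota>)\<^sup>2) / (2 * \<epsilon>) + real (card I) * (\<epsilon> / 2)"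
proof -
  have "(\<Sum>\<iota>\<in>I. \<bar>e \<iota>\<bar>) \<le> (\<Sum>\<iota>\<in>I. (e \<iota>)\<^sup>2 / (2 * \<epsilon>) + \<epsilon> / 2)"
    using assms by (intro sum_mono abs_le_sq_div_add)
  then show ?thesis by (simp add: sum.distrib sum_divide_distrib)
qed

text \<open>The \<open>\<ell>\<^sup>2\<close> bound of the empirical method, divided by \<open>s\<close>, gives the \<open>\<ell>\<^sup>1\<close> bound by AM-GM.\<close>
lemma exists_sampled_rank_one_approx:
  fixes w :: "'z \<Rightarrow> real" and a g :: "nat \<Rightarrow> 'z \<Rightarrow> real"
  assumes fZ: "finite Z" and ag: "\<forall>i z. \<bar>a i z\<bar> \<le> 1 \<and> \<bar>g i z\<bar> \<le> 1"
    and s: "s > 0" and eps: "\<epsilon> > 0" and sW: "4 * (\<Sum>z\<in>Z. \<bar>w z\<bar>)\<^sup>2 \<le> real s * \<epsilon>\<^sup>2"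
  shows "\<exists>\<zeta> c. (\<Sum>t<s. \<bar>c t\<bar>) \<le> (\<Sum>z\<in>Z. \<bar>w z\<bar>) \<and>
     (\<Sum>i<N. \<Sum>j<N. \<bar>(\<Sum>z\<in>Z. w z * a i z * g j z) - (\<Sum>t<s. c t * a i (\<zeta> t) * g j (\<zeta> t))\<bar>)
       \<le> real N ^ 2 * \<epsilon>"
proof -
  define W where "W = (\<Sum>z\<in>Z. \<bar>w z\<bar>)"
  define D where "D i j = (\<Sum>z\<in>Z. w z * a i z * g j z)" for i j
  obtain \<zeta> where \<zeta>: "(\<Sum>i<N. \<Sum>j<N. ((\<Sum>t<s. W * sgn (w (\<zeta> t)) * a i (\<zeta> t) * g j (\<zeta> t)) - s * D i j)\<^sup>2)
      \<le> real s * (real N ^ 2 * (4 * W\<^sup>2))"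
    using exists_sample_rank_one_sq_dev_le[OF fZ ag] unfolding W_def D_def by blast
  define c where "c t = W / s * sgn (w (\<zeta> t))" for t
  define e where "e \<iota> = ((\<Sum>t<s. W * sgn (w (\<zeta> t)) * a (fst \<iota>) (\<zeta> t) * g (snd \<iota>) (\<zeta> t))
    - s * D (fst \<iota>) (snd \<iota>)) / s" for \<iota>
  have "(\<Sum>t<s. \<bar>c t\<bar>) \<le> (\<Sum>t<s. W / s)"
    unfolding c_def W_def by (intro sum_mono) (auto simp: abs_mult abs_sgn_eq)
  then have c: "(\<Sum>t<s. \<bar>c t\<bar>) \<le> W" using s by simp
  have "\<bar>D i j - (\<Sum>t<s. c t * a i (\<zeta> t) * g j (\<zeta> t))\<bar> = \<bar>e (i, j)\<bar>" for i j
    unfolding e_def c_def using s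
    by (simp add: sum_divide_distrib[symmetric] field_simps abs_minus_commute)
  then have "(\<Sum>i<N. \<Sum>j<N. \<bar>D i j - (\<Sum>t<s. c t * a i (\<zeta> t) * g j (\<zeta> t))\<bar>)
      = (\<Sum>\<iota>\<in>{..<N} \<times> {..<N}. \<bar>e \<iota>\<bar>)"
    by (simp add: sum.cartesian_product)
  also have "\<dots> \<le> (\<Sum>\<iota>\<in>{..<N} \<times> {..<N}. (e \<iota>)\<^sup>2) / (2 * \<epsilon>) + real N ^ 2 * (\<epsilon> / 2)"
    using sum_abs_le_sum_sq[OF eps, of e "{..<N} \<times> {..<N}"] by (simp add: power2_eq_square)
  also have "(\<Sum>\<iota>\<in>{..<N} \<times> {..<N}. (e \<iota>)\<^sup>2)
      = (\<Sum>i<N. \<Sum>j<N. ((\<Sum>t<s. W * sgn (w (\<zeta> t)) * a i (\<zeta> t) * g j (\<zeta> t)) - s * D i j)\<^sup>2) / (real s)\<^sup>2"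
    unfolding e_def by (simp add: sum.cartesian_product power_divide sum_divide_distrib split_def)
  also have "\<dots> \<le> real N ^ 2 * (4 * W\<^sup>2 / (real s * \<epsilon>\<^sup>2)) * \<epsilon>\<^sup>2"
    using \<zeta> s eps by (simp add: divide_le_eq field_simps power2_eq_square)
  also have "\<dots> \<le> real N ^ 2 * \<epsilon>\<^sup>2"
    using sW s eps unfolding W_def by (intro mult_right_mono mult_left_le) (auto simp: divide_le_eq)
  finally show ?thesis
    using c eps unfolding D_def W_def by (intro exI[of _ \<zeta>] exI[of _ c]) (simp add: power2_eq_square field_simps)
qed

subsection \<open>Rounding to a grid and weak regularity\<close>

definition grid_round :: "nat \<Rightarrow> real \<Rightarrow> int" where
  "grid_round M x = \<lfloor>max (-1) (min 1 x) * real M\<rfloor>"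

definition profiles :: "nat \<Rightarrow> nat \<Rightarrow> ((nat \<Rightarrow> int) \<times> (nat \<Rightarrow> int)) set" where
  "profiles s M = PiE {..<s} (\<lambda>_. {-int M..int M}) \<times> PiE {..<s} (\<lambda>_. {-int M..int M})"

lemma finite_profiles: "finite (profiles s M)"
  unfolding profiles_def by (intro finite_cartesian_product finite_PiE) auto

lemma card_profiles: "card (profiles s M) = (2 * M + 1) ^ (2 * s)"
proof -
  have "card {-int M..int M} = 2 * M + 1" by simp
  then have "card (PiE {..<s} (\<lambda>_. {-int M..int M})) = (2 * M + 1) ^ s"
    by (simp add: card_PiE del: card_atLeastAtMost_int)
  then show ?thesis unfolding profiles_def card_cartesian_product by (simp add: power_add[symmetric] mult_2)
qed

lemma grid_round_mem: "grid_round M x \<in> {-int M..int M}"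
proof -
  define y where "y = max (-1) (min 1 x)"
  have "-1 \<le> y" "y \<le> 1" unfolding y_def by auto
  then have "- real M \<le> y * M" "y * M \<le> real M"
    using mult_right_mono[of y 1 "real M"] mult_right_mono[of "-1" y "real M"] by auto
  then show ?thesis unfolding grid_round_def y_def[symmetric]
    by (metis atLeastAtMost_iff floor_mono floor_of_int of_int_minus of_int_of_nat_eq)
qed

lemma grid_round_err:
  assumes "M > 0" "\<bar>x\<bar> \<le> 1"
  shows "\<bar>grid_round M x / M - x\<bar> \<le> 1 / M" "\<bar>grid_round M x / M\<bar> \<le> 1"
proof -
  have x: "max (-1) (min 1 x) = x" using assms by auto
  have "x * M - 1 < grid_round M x" "grid_round M x \<le> x * M" unfolding grid_round_def x by linarith+
  then have "\<bar>grid_round M x - x * M\<bar> / M \<le> 1 / M" using assms by (intro divide_right_mono) auto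
  moreover have "grid_round M x / M - x = (grid_round M x - x * M) / M" using assms by (simp add: field_simps)
  then have "\<bar>grid_round M x - x * M\<bar> / M = \<bar>grid_round M x / M - x\<bar>" by (simp add: abs_divide)
  ultimately show "\<bar>grid_round M x / M - x\<bar> \<le> 1 / M" by simp
  have "\<bar>real_of_int (grid_round M x)\<bar> \<le> M"
    using grid_round_mem[of M x] by (auto simp: abs_le_iff)
  then show "\<bar>grid_round M x / M\<bar> \<le> 1" using assms by (simp add: abs_divide)
qed

lemma rank_one_sum_grid_round_err:
  fixes c x y :: "nat \<Rightarrow> real"
  assumes M: "M > 0" and xy: "\<forall>t<s. \<bar>x t\<bar> \<le> 1 \<and> \<bar>y t\<bar> \<le> 1"
  shows "\<bar>(\<Sum>t<s. c t * x t * y t)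
      - (\<Sum>t<s. c t * (grid_round M (x t) / M) * (grid_round M (y t) / M))\<bar> \<le> 2 * (\<Sum>t<s. \<bar>c t\<bar>) / M"
proof -
  have diff: "(\<Sum>t<s. c t * x t * y t) - (\<Sum>t<s. c t * (grid_round M (x t) / M) * (grid_round M (y t) / M))
      = (\<Sum>t<s. c t * (x t * y t - (grid_round M (x t) / M) * (grid_round M (y t) / M)))"
    by (simp add: sum_subtractf[symmetric] algebra_simps)
  have "\<bar>(\<Sum>t<s. c t * x t * y t) - (\<Sum>t<s. c t * (grid_round M (x t) / M) * (grid_round M (y t) / M))\<bar>
      \<le> (\<Sum>t<s. \<bar>c t\<bar> * \<bar>x t * y t - (grid_round M (x t) / M) * (grid_round M (y t) / M)\<bar>)"
    unfolding diff by (rule order_trans[OF sum_abs]) (simp add: abs_mult)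
  also have "\<dots> \<le> (\<Sum>t<s. \<bar>c t\<bar> * (2 * (1 / M)))"
    using xy M by (intro sum_mono mult_left_mono abs_mult_diff_le grid_round_err) auto
  also have "\<dots> = 2 * (\<Sum>t<s. \<bar>c t\<bar>) / M"
    unfolding sum_distrib_right[symmetric] by simp
  finally show ?thesis .
qed

lemma sum_sum_abs_diff_le:
  fixes D S G :: "nat \<Rightarrow> nat \<Rightarrow> real"
  assumes "\<And>i j. \<bar>S i j - G i j\<bar> \<le> \<eta>"
  shows "(\<Sum>i<N. \<Sum>j<N. \<bar>D i j - G i j\<bar>) \<le> (\<Sum>i<N. \<Sum>j<N. \<bar>D i j - S i j\<bar>) + real N ^ 2 * \<eta>"
proof -
  have "(\<Sum>i<N. \<Sum>j<N. \<bar>D i j - G i j\<bar>) \<le> (\<Sum>i<N. \<Sum>j<N. \<bar>D i j - S i j\<bar> + \<eta>)"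
    using assms by (intro sum_mono) (smt (verit))
  then show ?thesis by (simp add: sum.distrib power2_eq_square)
qed

definition sample_size :: "real \<Rightarrow> real \<Rightarrow> nat" where
  "sample_size B \<delta> = nat \<lceil>16 * B\<^sup>2 / \<delta>\<^sup>2\<rceil> + 1"

definition grid_size :: "real \<Rightarrow> real \<Rightarrow> nat" where
  "grid_size B \<delta> = nat \<lceil>4 * B / \<delta>\<rceil> + 1"

lemma sample_size_ge:
  assumes "\<delta> > 0" "0 \<le> W" "W \<le> B"
  shows "4 * W\<^sup>2 \<le> real (sample_size B \<delta>) * (\<delta> / 2)\<^sup>2"
proof -
  have "16 * B\<^sup>2 / \<delta>\<^sup>2 \<le> real (sample_size B \<delta>)" unfolding sample_size_def by linarith
  then have "16 * B\<^sup>2 \<le> real (sample_size B \<delta>) * \<delta>\<^sup>2" using assms(1) by (simp add: divide_le_eq)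
  moreover have "W\<^sup>2 \<le> B\<^sup>2" using assms(2,3) by (simp add: power_mono)
  ultimately show ?thesis by (simp add: power_divide)
qed

lemma grid_size_ge:
  assumes "\<delta> > 0" "W \<le> B"
  shows "2 * W / real (grid_size B \<delta>) \<le> \<delta> / 2"
proof -
  have "4 * B / \<delta> \<le> real (grid_size B \<delta>)" unfolding grid_size_def by linarith
  then have "2 * W \<le> real (grid_size B \<delta>) * (\<delta> / 2)" using assms by (simp add: divide_le_eq)
  moreover have "grid_size B \<delta> > 0" unfolding grid_size_def by simp
  ultimately show ?thesis by (simp add: divide_le_eq mult.commute)
qed

lemma exists_profile_approx:
  fixes w :: "'z \<Rightarrow> real" and a g :: "nat \<Rightarrow> 'z \<Rightarrow> real"
  assumes \<delta>: "\<delta> > 0" and fZ: "finite Z" and ag: "\<forall>i z. \<bar>a i z\<bar> \<le> 1 \<and> \<bar>g i z\<bar> \<le> 1"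
    and wB: "(\<Sum>z\<in>Z. \<bar>w z\<bar>) \<le> B"
  shows "\<exists>\<kappa> G. (\<forall>i<N. \<kappa> i \<in> profiles (sample_size B \<delta>) (grid_size B \<delta>)) \<and>
    (\<Sum>i<N. \<Sum>j<N. \<bar>(\<Sum>z\<in>Z. w z * a i z * g j z) - G (\<kappa> i) (\<kappa> j)\<bar>) \<le> real N ^ 2 * \<delta>"
proof -
  define s where "s = sample_size B \<delta>"
  define M where "M = grid_size B \<delta>"
  have s: "s > 0" and M: "M > 0" unfolding s_def M_def sample_size_def grid_size_def by auto
  have "4 * (\<Sum>z\<in>Z. \<bar>w z\<bar>)\<^sup>2 \<le> real s * (\<delta> / 2)\<^sup>2"
    unfolding s_def using sample_size_ge[OF \<delta> _ wB] by simp
  moreover have "\<delta> / 2 > 0" using \<delta> by simp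
  ultimately obtain \<zeta> c where c: "(\<Sum>t<s. \<bar>c t\<bar>) \<le> (\<Sum>z\<in>Z. \<bar>w z\<bar>)"
    and sample: "(\<Sum>i<N. \<Sum>j<N. \<bar>(\<Sum>z\<in>Z. w z * a i z * g j z) - (\<Sum>t<s. c t * a i (\<zeta> t) * g j (\<zeta> t))\<bar>)
      \<le> real N ^ 2 * (\<delta> / 2)"
    using exists_sampled_rank_one_approx[OF fZ ag s] by blast
  have round: "2 * (\<Sum>t<s. \<bar>c t\<bar>) / M \<le> \<delta> / 2"
    unfolding M_def using grid_size_ge[OF \<delta> order_trans[OF c wB]] .
  define \<kappa> where "\<kappa> i = (restrict (\<lambda>t. grid_round M (a i (\<zeta> t))) {..<s},
    restrict (\<lambda>t. grid_round M (g i (\<zeta> t))) {..<s})" for i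
  define G where "G u v = (\<Sum>t<s. c t * (fst u t / M) * (snd v t / M))"
    for u v :: "(nat \<Rightarrow> int) \<times> (nat \<Rightarrow> int)"
  show ?thesis unfolding s_def[symmetric] M_def[symmetric]
  proof (intro exI[of _ \<kappa>] exI[of _ G] conjI)
    show "\<forall>i<N. \<kappa> i \<in> profiles s M" unfolding \<kappa>_def profiles_def using grid_round_mem by auto
    let ?S = "\<lambda>i j. \<Sum>t<s. c t * a i (\<zeta> t) * g j (\<zeta> t)"
    have "\<bar>?S i j - G (\<kappa> i) (\<kappa> j)\<bar> \<le> \<delta> / 2" for i j
    proof -
      have "G (\<kappa> i) (\<kappa> j)
          = (\<Sum>t<s. c t * (grid_round M (a i (\<zeta> t)) / M) * (grid_round M (g j (\<zeta> t)) / M))"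
        unfolding G_def \<kappa>_def by (intro sum.cong) auto
      then show ?thesis
        using rank_one_sum_grid_round_err[OF M, of s "\<lambda>t. a i (\<zeta> t)" "\<lambda>t. g j (\<zeta> t)" c] ag round
        by auto
    qed
    then have "(\<Sum>i<N. \<Sum>j<N. \<bar>(\<Sum>z\<in>Z. w z * a i z * g j z) - G (\<kappa> i) (\<kappa> j)\<bar>)
        \<le> (\<Sum>i<N. \<Sum>j<N. \<bar>(\<Sum>z\<in>Z. w z * a i z * g j z) - ?S i j\<bar>) + real N ^ 2 * (\<delta> / 2)"
      by (rule sum_sum_abs_diff_le)
    then show "(\<Sum>i<N. \<Sum>j<N. \<bar>(\<Sum>z\<in>Z. w z * a i z * g j z) - G (\<kappa> i) (\<kappa> j)\<bar>)
        \<le> real N ^ 2 * \<delta>"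
      using sample by linarith
  qed
qed

subsection \<open>Block matrices, unordered pairs and the mean-field map\<close>

lemma block_matrix_of_labelling:
  assumes fK: "finite K" and \<kappa>: "\<forall>i<N. \<kappa> i \<in> K" and sym: "\<And>u v. H u v = H v u"
  shows "block_matrix N (card K) (\<lambda>i j. H (\<kappa> i) (\<kappa> j))"
proof -
  obtain h where h: "bij_betw h {..<card K} K"
    using ex_bij_betw_nat_finite[OF fK] atLeast0LessThan by metis
  define P where "P a b = H (h a) (h b)" for a b
  define V where "V a = {i. i < N \<and> \<kappa> i = h a}" for a
  have "\<forall>a<card K. \<forall>b<card K. a \<noteq> b \<longrightarrow> V a \<inter> V b = {}"
    using h unfolding V_def bij_betw_def inj_on_def by auto
  moreover have "(\<Union>a<card K. V a) = {..<N}"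
  proof
    show "{..<N} \<subseteq> (\<Union>a<card K. V a)"
    proof
      fix i assume "i \<in> {..<N}"
      moreover obtain a where "a < card K" "\<kappa> i = h a"
        using \<kappa> h \<open>i \<in> {..<N}\<close> unfolding bij_betw_def by (metis imageE lessThan_iff)
      ultimately show "i \<in> (\<Union>a<card K. V a)" unfolding V_def by auto
    qed
  qed (auto simp: V_def)
  ultimately show ?thesis
    unfolding block_matrix_def using sym by (intro exI[of _ P] exI[of _ V]) (auto simp: P_def V_def)
qed

lemma doubleton_in_pairsI:
  assumes "x \<noteq> y" "x < N" "y < N"
  shows "{x, y} \<in> pairs N"
proof (cases "x < y")
  case True
  then show ?thesis using assms unfolding pairs_def by blast
next
  case False
  then have "y < x" "{x, y} = {y, x}" using assms by auto
  then show ?thesis using assms unfolding pairs_def by blast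
qed

lemma pairsE:
  assumes "e \<in> pairs m"
  obtains a b where "a < b" "b < m" "e = {a, b}"
  using assms unfolding pairs_def by auto

lemma pairs_Min_Max:
  assumes "e \<in> pairs m"
  shows "Min e < Max e" "Max e < m" "e = {Min e, Max e}"
proof -
  obtain a b where ab: "a < b" "b < m" "e = {a, b}" using pairsE[OF assms] by blast
  then have "Min e = a" "Max e = b" by auto
  then show "Min e < Max e" "Max e < m" "e = {Min e, Max e}" using ab by auto
qed

lemma finite_pairs: "finite (pairs m)"
  by (rule finite_subset[of _ "Pow {..<m}"]) (auto simp: pairs_def)

lemma pairs_subset_lessThan: "e \<in> pairs m \<Longrightarrow> e \<subseteq> {..<m}"
  by (erule pairsE) auto

lemma card_pairs_elem: "e \<in> pairs m \<Longrightarrow> card e = 2"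
  by (erule pairsE) auto

lemma pairs_elem_eq_doubleton: "f \<in> pairs m \<Longrightarrow> a \<in> f \<Longrightarrow> b \<in> f \<Longrightarrow> a \<noteq> b \<Longrightarrow> f = {a, b}"
  by (elim pairsE) auto

lemma image_pairs_elem_in_pairs:
  assumes q: "q \<in> inj_maps m N" and e: "e \<in> pairs m"
  shows "q ` e \<in> pairs N"
proof -
  obtain a b where ab: "a < b" "b < m" "e = {a, b}" using pairsE[OF e] by blast
  then have "q a \<noteq> q b" "q a < N" "q b < N" using q unfolding inj_maps_def inj_on_def by auto
  then show ?thesis using ab by (simp add: doubleton_in_pairsI)
qed

lemma real_choose_two: "real (N choose 2) = real N * (real N - 1) / 2"
proof (induction N)
  case (Suc n)
  have "real (Suc n choose 2) = real n + real (n choose 2)"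
    by (simp add: numeral_2_eq_2)
  then show ?case using Suc by (simp add: field_simps)
qed simp

lemma sq_div_four_le_choose_two:
  assumes "2 \<le> N"
  shows "real N ^ 2 / 4 \<le> real (N choose 2)"
proof -
  have "2 * real N \<le> real N * real N" using assms by (intro mult_right_mono) auto
  then show ?thesis unfolding real_choose_two by (simp add: power2_eq_square algebra_simps)
qed

lemma sum_ordered_pairs_eq_sum_pairs:
  "(\<Sum>(i, j)\<in>{(i, j). i < j \<and> j < N}. F {i, j}) = (\<Sum>e\<in>pairs N. F e)"
proof -
  have "pairs N = (\<lambda>(i, j). {i, j}) ` {(i, j). i < j \<and> j < N}" unfolding pairs_def by auto
  moreover have "inj_on (\<lambda>(i, j). {i, j}) {(i, j). i < (j::nat) \<and> j < N}"
    by (auto simp: inj_on_def doubleton_eq_iff)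
  ultimately show ?thesis by (simp add: sum.reindex split_def)
qed

lemma sum_ordered_pairs_sym_le:
  fixes f :: "nat \<Rightarrow> nat \<Rightarrow> real"
  assumes f0: "\<And>i j. f i j \<ge> 0"
  shows "(\<Sum>(i, j)\<in>{(i, j). i < j \<and> j < N}. f i j + f j i) \<le> (\<Sum>i<N. \<Sum>j<N. f i j)"
proof -
  let ?P = "{(i, j). i < j \<and> j < N}"
  let ?P' = "{(i, j). j < i \<and> i < N}"
  have fP: "finite ?P" by (rule finite_subset[of _ "{..<N} \<times> {..<N}"]) auto
  have sw: "?P' = prod.swap ` ?P" by (auto simp: image_iff)
  have "(\<Sum>(i, j)\<in>?P. f j i) = (\<Sum>(i, j)\<in>?P'. f i j)"
    unfolding sw by (subst sum.reindex) (auto simp: split_def)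
  then have "(\<Sum>(i, j)\<in>?P. f i j + f j i) = (\<Sum>(i, j)\<in>?P. f i j) + (\<Sum>(i, j)\<in>?P'. f i j)"
    by (simp add: split_def sum.distrib)
  also have "\<dots> = (\<Sum>(i, j)\<in>?P \<union> ?P'. f i j)"
    by (rule sum.union_disjoint[symmetric]) (use fP sw in auto)
  also have "\<dots> \<le> (\<Sum>(i, j)\<in>{..<N} \<times> {..<N}. f i j)"
    by (rule sum_mono2) (auto simp: f0 split_def)
  finally show ?thesis by (simp add: sum.cartesian_product)
qed

lemma abs_mean_field_diff_le:
  fixes x g h :: real
  shows "\<bar>x - (1 + tanh g) / 2\<bar> \<le> \<bar>x - (1 + tanh h) / 2\<bar> + \<bar>h - g\<bar> / 2"
proof -
  have eq: "x - (1 + tanh g) / 2 = (x - (1 + tanh h) / 2) + (tanh h - tanh g) / 2"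
    by (simp add: field_simps)
  have "\<bar>x - (1 + tanh g) / 2\<bar> \<le> \<bar>x - (1 + tanh h) / 2\<bar> + \<bar>(tanh h - tanh g) / 2\<bar>"
    unfolding eq by (rule abs_triangle_ineq)
  moreover have "\<bar>(tanh h - tanh g) / 2\<bar> \<le> \<bar>h - g\<bar> / 2"
    using tanh_real_dist_le[of h g] by (simp add: abs_divide)
  ultimately show ?thesis by linarith
qed

text \<open>Symmetrising \<open>G\<close> costs nothing since \<open>h\<close> is indexed by unordered pairs.\<close>
lemma dist1_mean_field_le:
  fixes X h :: "nat set \<Rightarrow> real" and D :: "nat \<Rightarrow> nat \<Rightarrow> real" and G :: "'k \<Rightarrow> 'k \<Rightarrow> real"
  assumes hD: "\<forall>i<N. \<forall>j<N. i \<noteq> j \<longrightarrow> h {i, j} = D i j"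
  shows "dist1 N X (\<lambda>i j. (1 + tanh ((G (\<kappa> i) (\<kappa> j) + G (\<kappa> j) (\<kappa> i)) / 2)) / 2)
    \<le> (\<Sum>e\<in>pairs N. \<bar>X e - (1 + tanh (h e)) / 2\<bar>) + (\<Sum>i<N. \<Sum>j<N. \<bar>D i j - G (\<kappa> i) (\<kappa> j)\<bar>) / 4"
proof -
  let ?P = "{(i, j). i < j \<and> j < N}"
  define f where "f i j = \<bar>D i j - G (\<kappa> i) (\<kappa> j)\<bar>" for i j
  have pt: "\<bar>X {i, j} - (1 + tanh ((G (\<kappa> i) (\<kappa> j) + G (\<kappa> j) (\<kappa> i)) / 2)) / 2\<bar>
      \<le> \<bar>X {i, j} - (1 + tanh (h {i, j})) / 2\<bar> + (f i j + f j i) / 4"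
    if "(i, j) \<in> ?P" for i j
  proof -
    let ?g = "(G (\<kappa> i) (\<kappa> j) + G (\<kappa> j) (\<kappa> i)) / 2"
    have "h {i, j} = D i j" "h {i, j} = D j i"
      using hD[rule_format, of i j] hD[rule_format, of j i] that by (auto simp: insert_commute)
    then have hg: "h {i, j} - ?g = ((D i j - G (\<kappa> i) (\<kappa> j)) + (D j i - G (\<kappa> j) (\<kappa> i))) / 2"
      by (simp add: field_simps)
    have "\<bar>h {i, j} - ?g\<bar> \<le> (f i j + f j i) / 2"
      unfolding hg f_def abs_divide abs_numeral by (intro divide_right_mono abs_triangle_ineq) auto
    then show ?thesis using abs_mean_field_diff_le[of "X {i, j}" ?g "h {i, j}"] by argo
  qed
  have "dist1 N X (\<lambda>i j. (1 + tanh ((G (\<kappa> i) (\<kappa> j) + G (\<kappa> j) (\<kappa> i)) / 2)) / 2)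
      \<le> (\<Sum>(i, j)\<in>?P. \<bar>X {i, j} - (1 + tanh (h {i, j})) / 2\<bar> + (f i j + f j i) / 4)"
    unfolding dist1_def using pt by (intro sum_mono) auto
  also have "\<dots> = (\<Sum>(i, j)\<in>?P. \<bar>X {i, j} - (1 + tanh (h {i, j})) / 2\<bar>) + (\<Sum>(i, j)\<in>?P. f i j + f j i) / 4"
    unfolding split_def by (simp only: sum.distrib sum_divide_distrib add_divide_distrib)
  also have "\<dots> \<le> (\<Sum>e\<in>pairs N. \<bar>X e - (1 + tanh (h e)) / 2\<bar>) + (\<Sum>i<N. \<Sum>j<N. f i j) / 4"
    using sum_ordered_pairs_sym_le[of f N] sum_ordered_pairs_eq_sum_pairs[of "\<lambda>e. \<bar>X e - (1 + tanh (h e)) / 2\<bar>" N]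
    unfolding f_def by simp
  finally show ?thesis unfolding f_def .
qed

subsection \<open>The discrete gradient of subgraph densities\<close>

lemma prod_upd_one_minus_prod_upd_zero:
  fixes X :: "nat set \<Rightarrow> real"
  assumes q: "q \<in> inj_maps m N" and E: "E \<subseteq> pairs m"
  shows "(\<Prod>f\<in>E. (X(e := 1)) (q ` f)) - (\<Prod>f\<in>E. (X(e := 0)) (q ` f))
       = (\<Sum>f\<in>E. if q ` f = e then (\<Prod>f'\<in>E - {f}. X (q ` f')) else 0)"
proof -
  have fE: "finite E" using E finite_pairs finite_subset by blast
  show ?thesis
  proof (cases "\<exists>f0\<in>E. q ` f0 = e")
    case True
    then obtain f0 where f0: "f0 \<in> E" "q ` f0 = e" by blast
    have "inj_on q {..<m}" using q unfolding inj_maps_def by auto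
    then have others: "q ` f \<noteq> e" if "f \<in> E - {f0}" for f
      using that f0 E pairs_subset_lessThan by (metis DiffE inj_on_image_eq_iff insertI1 subsetD)
    have upd: "(\<Prod>f\<in>E. (X(e := c)) (q ` f)) = c * (\<Prod>f\<in>E - {f0}. X (q ` f))" for c
    proof -
      have "(\<Prod>f\<in>E. (X(e := c)) (q ` f)) = c * (\<Prod>f\<in>E - {f0}. (X(e := c)) (q ` f))"
        using fE f0 by (simp add: prod.remove)
      also have "(\<Prod>f\<in>E - {f0}. (X(e := c)) (q ` f)) = (\<Prod>f\<in>E - {f0}. X (q ` f))"
        using others by (intro prod.cong) auto
      finally show ?thesis .
    qed
    have "(\<Sum>f\<in>E. if q ` f = e then (\<Prod>f'\<in>E - {f}. X (q ` f')) else 0)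
        = (\<Prod>f'\<in>E - {f0}. X (q ` f')) + (\<Sum>f\<in>E - {f0}. if q ` f = e then (\<Prod>f'\<in>E - {f}. X (q ` f')) else 0)"
      using fE f0 by (simp add: sum.remove)
    also have "(\<Sum>f\<in>E - {f0}. if q ` f = e then (\<Prod>f'\<in>E - {f}. X (q ` f')) else 0) = 0"
      using others by (intro sum.neutral) auto
    finally show ?thesis using upd[of 1] upd[of 0] by simp
  next
    case False
    then have "(\<Prod>f\<in>E. (X(e := c)) (q ` f)) = (\<Prod>f\<in>E. X (q ` f))" for c
      by (intro prod.cong) auto
    moreover have "(\<Sum>f\<in>E. if q ` f = e then (\<Prod>f'\<in>E - {f}. X (q ` f')) else 0) = 0"
      using False by (intro sum.neutral) auto
    ultimately show ?thesis by simp
  qed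
qed

lemma finite_inj_maps: "finite (inj_maps m N)"
proof -
  let ?F = "(\<lambda>z l. if l < m then z l else 0) ` PiE {..<m} (\<lambda>_. {..<N})"
  have "inj_maps m N \<subseteq> ?F"
  proof
    fix q assume q: "q \<in> inj_maps m N"
    have "q = (\<lambda>l. if l < m then restrict q {..<m} l else 0)"
      using q unfolding inj_maps_def by (auto simp: fun_eq_iff)
    moreover have "restrict q {..<m} \<in> PiE {..<m} (\<lambda>_. {..<N})" using q unfolding inj_maps_def by auto
    ultimately show "q \<in> ?F" by blast
  qed
  moreover have "finite ?F" by (intro finite_imageI finite_PiE) auto
  ultimately show ?thesis by (rule finite_subset)
qed

definition extend_map :: "nat \<Rightarrow> nat \<Rightarrow> nat \<Rightarrow> (nat \<Rightarrow> nat) \<Rightarrow> nat \<Rightarrow> nat \<Rightarrow> nat \<Rightarrow> nat" where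
  "extend_map m a b z i j = (\<lambda>l. if l = a then i else if l = b then j else if l < m then z l else 0)"

lemma extend_map_in_inj_maps_iff:
  assumes ab: "a < m" "b < m" "a \<noteq> b" and R: "R = {..<m} - {a, b}"
    and z: "z \<in> PiE R (\<lambda>_. {..<N})" and ij: "i < N" "j < N" "i \<noteq> j"
  shows "extend_map m a b z i j \<in> inj_maps m N \<longleftrightarrow> inj_on z R \<and> i \<notin> z ` R \<and> j \<notin> z ` R"
proof -
  let ?q = "extend_map m a b z i j"
  have on_R: "\<forall>l\<in>R. ?q l = z l" using R unfolding extend_map_def by auto
  then have "inj_on ?q R \<longleftrightarrow> inj_on z R" "?q ` R = z ` R" by (auto intro!: inj_on_cong)
  moreover have "{..<m} = insert a (insert b R)" "a \<notin> R" "b \<notin> R" "?q a = i" "?q b = j"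
    using ab R unfolding extend_map_def by auto
  ultimately have "inj_on ?q {..<m} \<longleftrightarrow> inj_on z R \<and> i \<notin> z ` R \<and> j \<notin> z ` R"
    using ab ij by (auto simp: insert_Diff_if)
  moreover have "\<forall>l<m. ?q l < N" "\<forall>l\<ge>m. ?q l = 0"
    using z ij ab R unfolding extend_map_def by (auto simp: PiE_iff)
  ultimately show ?thesis unfolding inj_maps_def by auto
qed

lemma extend_map_restrict:
  assumes "q \<in> inj_maps m N" "q a = i" "q b = j" "a < m" "b < m" "R = {..<m} - {a, b}"
  shows "extend_map m a b (restrict q R) i j = q"
proof
  fix l
  have "\<forall>l\<ge>m. q l = 0" using assms(1) unfolding inj_maps_def by blast
  then show "extend_map m a b (restrict q R) i j l = q l"
    using assms(2-) unfolding extend_map_def by (cases "l < m") auto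
qed

lemma bij_betw_extend_map:
  assumes ab: "a < m" "b < m" "a \<noteq> b" and R: "R = {..<m} - {a, b}" and ij: "i < N" "j < N" "i \<noteq> j"
  shows "bij_betw (\<lambda>z. extend_map m a b z i j)
    {z \<in> PiE R (\<lambda>_. {..<N}). inj_on z R \<and> i \<notin> z ` R \<and> j \<notin> z ` R}
    {q \<in> inj_maps m N. q a = i \<and> q b = j}"
proof (rule bij_betw_byWitness[where f'="\<lambda>q. restrict q R"])
  show "(\<lambda>q. restrict q R) ` {q \<in> inj_maps m N. q a = i \<and> q b = j}
      \<subseteq> {z \<in> PiE R (\<lambda>_. {..<N}). inj_on z R \<and> i \<notin> z ` R \<and> j \<notin> z ` R}"
  proof
    fix z assume "z \<in> (\<lambda>q. restrict q R) ` {q \<in> inj_maps m N. q a = i \<and> q b = j}"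
    then obtain q where q: "q \<in> inj_maps m N" "q a = i" "q b = j" and z: "z = restrict q R" by blast
    have zP: "z \<in> PiE R (\<lambda>_. {..<N})" using q R unfolding z inj_maps_def by auto
    have "extend_map m a b z i j \<in> inj_maps m N"
      using extend_map_restrict[OF q ab(1,2) R] q unfolding z by simp
    then show "z \<in> {z \<in> PiE R (\<lambda>_. {..<N}). inj_on z R \<and> i \<notin> z ` R \<and> j \<notin> z ` R}"
      using extend_map_in_inj_maps_iff[OF ab R zP ij] zP by auto
  qed
  show "\<forall>q\<in>{q \<in> inj_maps m N. q a = i \<and> q b = j}. extend_map m a b (restrict q R) i j = q"
    using extend_map_restrict[OF _ _ _ ab(1,2) R] by auto
  show "\<forall>z\<in>{z \<in> PiE R (\<lambda>_. {..<N}). inj_on z R \<and> i \<notin> z ` R \<and> j \<notin> z ` R}.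
      restrict (extend_map m a b z i j) R = z"
  proof
    fix z assume z: "z \<in> {z \<in> PiE R (\<lambda>_. {..<N}). inj_on z R \<and> i \<notin> z ` R \<and> j \<notin> z ` R}"
    show "restrict (extend_map m a b z i j) R = z"
    proof
      fix l
      show "restrict (extend_map m a b z i j) R l = z l"
        using z R PiE_arb[of z R _ l] unfolding extend_map_def by (cases "l \<in> R") auto
    qed
  qed
  show "(\<lambda>z. extend_map m a b z i j) ` {z \<in> PiE R (\<lambda>_. {..<N}). inj_on z R \<and> i \<notin> z ` R \<and> j \<notin> z ` R}
      \<subseteq> {q \<in> inj_maps m N. q a = i \<and> q b = j}"
  proof
    fix q assume "q \<in> (\<lambda>z. extend_map m a b z i j) ` {z \<in> PiE R (\<lambda>_. {..<N}). inj_on z R \<and> i \<notin> z ` R \<and> j \<notin> z ` R}"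
    then obtain z where z: "z \<in> PiE R (\<lambda>_. {..<N})" "inj_on z R \<and> i \<notin> z ` R \<and> j \<notin> z ` R"
      and q: "q = extend_map m a b z i j" by blast
    have "q \<in> inj_maps m N" using extend_map_in_inj_maps_iff[OF ab R z(1) ij] z(2) q by blast
    moreover have "q a = i" "q b = j" using ab unfolding q extend_map_def by auto
    ultimately show "q \<in> {q \<in> inj_maps m N. q a = i \<and> q b = j}" by blast
  qed
qed

definition clip_unit :: "(nat set \<Rightarrow> real) \<Rightarrow> nat set \<Rightarrow> real" where
  "clip_unit X e = max 0 (min 1 (X e))"

text \<open>For an edge \<open>e = {a, b}\<close> (\<open>a < b\<close>) of \<open>H\<close> and a placement \<open>z\<close> of the other vertices, the
  product over the remaining edges splits into the edges avoiding \<open>b\<close>, a function of the image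
  \<open>i\<close> of \<open>a\<close>, and the edges through \<open>b\<close>, a function of the image \<open>j\<close> of \<open>b\<close>; injectivity splits
  likewise. Clipping \<open>X\<close> to \<open>[0, 1]\<close> makes both factors bounded by \<open>1\<close> everywhere and changes
  nothing on \<open>Xf\<close>.\<close>
definition edge_factor_left ::
    "nat \<Rightarrow> nat set set \<Rightarrow> nat set \<Rightarrow> (nat set \<Rightarrow> real) \<Rightarrow> (nat \<Rightarrow> nat) \<Rightarrow> nat \<Rightarrow> real" where
  "edge_factor_left m E e X z i =
     (if inj_on z ({..<m} - e) \<and> i \<notin> z ` ({..<m} - e) then 1 else 0) *
     (\<Prod>f\<in>{f\<in>E - {e}. Max e \<notin> f}. clip_unit X (extend_map m (Min e) (Max e) z i 0 ` f))"

definition edge_factor_right ::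
    "nat \<Rightarrow> nat set set \<Rightarrow> nat set \<Rightarrow> (nat set \<Rightarrow> real) \<Rightarrow> (nat \<Rightarrow> nat) \<Rightarrow> nat \<Rightarrow> real" where
  "edge_factor_right m E e X z j =
     (if j \<notin> z ` ({..<m} - e) then 1 else 0) *
     (\<Prod>f\<in>{f\<in>E - {e}. Max e \<in> f}. clip_unit X (extend_map m (Min e) (Max e) z 0 j ` f))"

lemma abs_prod_clip_unit_le: "\<bar>\<Prod>f\<in>A. clip_unit X (h f)\<bar> \<le> 1"
proof -
  have "0 \<le> clip_unit X e" "clip_unit X e \<le> 1" for e unfolding clip_unit_def by auto
  then show ?thesis by (simp add: prod_nonneg prod_le_1 abs_of_nonneg)
qed

lemma abs_edge_factor_left_le: "\<bar>edge_factor_left m E e X z i\<bar> \<le> 1"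
  using abs_prod_clip_unit_le[of X "\<lambda>f. extend_map m (Min e) (Max e) z i 0 ` f" "{f\<in>E - {e}. Max e \<notin> f}"]
  unfolding edge_factor_left_def by (simp add: abs_mult)

lemma abs_edge_factor_right_le: "\<bar>edge_factor_right m E e X z j\<bar> \<le> 1"
  using abs_prod_clip_unit_le[of X "\<lambda>f. extend_map m (Min e) (Max e) z 0 j ` f" "{f\<in>E - {e}. Max e \<in> f}"]
  unfolding edge_factor_right_def by (simp add: abs_mult)

lemma prod_other_edges_eq_edge_factors:
  fixes X :: "nat set \<Rightarrow> real"
  assumes E: "E \<subseteq> pairs m" and e: "e \<in> E" and R: "R = {..<m} - e"
    and z: "inj_on z R" "i \<notin> z ` R" "j \<notin> z ` R"
    and q: "extend_map m (Min e) (Max e) z i j \<in> inj_maps m N"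
    and X01: "\<forall>f\<in>pairs N. 0 \<le> X f \<and> X f \<le> 1"
  shows "(\<Prod>f\<in>E - {e}. X (extend_map m (Min e) (Max e) z i j ` f))
    = edge_factor_left m E e X z i * edge_factor_right m E e X z j"
proof -
  let ?q = "extend_map m (Min e) (Max e) z i j"
  have ab: "Min e \<noteq> Max e" "e = {Min e, Max e}" using pairs_Min_Max[of e m] E e by auto
  define A1 where "A1 = {f\<in>E - {e}. Max e \<notin> f}"
  define A2 where "A2 = {f\<in>E - {e}. Max e \<in> f}"
  have clip: "clip_unit X (?q ` f) = X (?q ` f)" if "f \<in> E" for f
    using image_pairs_elem_in_pairs[OF q] that E X01 unfolding clip_unit_def by fastforce
  have "(\<Prod>f\<in>A1. clip_unit X (extend_map m (Min e) (Max e) z i 0 ` f)) = (\<Prod>f\<in>A1. X (?q ` f))"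
  proof (rule prod.cong[OF refl])
    fix f assume f: "f \<in> A1"
    then have "extend_map m (Min e) (Max e) z i 0 ` f = ?q ` f"
      unfolding A1_def extend_map_def by (intro image_cong) auto
    then show "clip_unit X (extend_map m (Min e) (Max e) z i 0 ` f) = X (?q ` f)"
      using clip f unfolding A1_def by auto
  qed
  moreover have "(\<Prod>f\<in>A2. clip_unit X (extend_map m (Min e) (Max e) z 0 j ` f)) = (\<Prod>f\<in>A2. X (?q ` f))"
  proof (rule prod.cong[OF refl])
    fix f assume f: "f \<in> A2"
    have "Min e \<notin> f"
    proof
      assume "Min e \<in> f"
      then have "f = e" using pairs_elem_eq_doubleton[of f m "Min e" "Max e"] f E ab unfolding A2_def by auto
      then show False using f unfolding A2_def by auto
    qed
    then have "extend_map m (Min e) (Max e) z 0 j ` f = ?q ` f"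
      unfolding extend_map_def by (intro image_cong) auto
    then show "clip_unit X (extend_map m (Min e) (Max e) z 0 j ` f) = X (?q ` f)"
      using clip f unfolding A2_def by auto
  qed
  moreover have "E - {e} = A1 \<union> A2" "A1 \<inter> A2 = {}" "finite A1" "finite A2"
    unfolding A1_def A2_def using E finite_pairs finite_subset by (auto intro: finite_subset)
  ultimately show ?thesis
    using z unfolding edge_factor_left_def edge_factor_right_def A1_def[symmetric] A2_def[symmetric]
      R[symmetric] by (simp add: prod.union_disjoint)
qed

definition edge_embedding_sum ::
    "nat \<Rightarrow> nat set set \<Rightarrow> nat set \<Rightarrow> (nat set \<Rightarrow> real) \<Rightarrow> nat \<Rightarrow> nat \<Rightarrow> nat \<Rightarrow> real" where
  "edge_embedding_sum m E e X N i j =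
     (\<Sum>z\<in>PiE ({..<m} - e) (\<lambda>_. {..<N}). edge_factor_left m E e X z i * edge_factor_right m E e X z j)"

lemma sum_inj_maps_edge_to_eq:
  fixes X :: "nat set \<Rightarrow> real"
  assumes E: "E \<subseteq> pairs m" and e: "e \<in> E" and ij: "i < N" "j < N" "i \<noteq> j"
    and X01: "\<forall>f\<in>pairs N. 0 \<le> X f \<and> X f \<le> 1"
  shows "(\<Sum>q\<in>inj_maps m N. if q (Min e) = i \<and> q (Max e) = j then (\<Prod>f\<in>E - {e}. X (q ` f)) else 0)
       = edge_embedding_sum m E e X N i j"
proof -
  define a where "a = Min e"
  define b where "b = Max e"
  define R where "R = {..<m} - e"
  have ab: "a < m" "b < m" "a \<noteq> b" and R': "R = {..<m} - {a, b}"
    using pairs_Min_Max[of e m] E e unfolding a_def b_def R_def by auto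
  define Q where "Q = {q\<in>inj_maps m N. q a = i \<and> q b = j}"
  define ZS where "ZS = {z\<in>PiE R (\<lambda>_. {..<N}). inj_on z R \<and> i \<notin> z ` R \<and> j \<notin> z ` R}"
  define h where "h q = (\<Prod>f\<in>E - {e}. X (q ` f))" for q
  have "(\<Sum>q\<in>inj_maps m N. if q a = i \<and> q b = j then h q else 0) = (\<Sum>q\<in>Q. h q)"
    unfolding Q_def using finite_inj_maps by (simp add: sum.inter_filter)
  also have "\<dots> = (\<Sum>z\<in>ZS. h (extend_map m a b z i j))"
    using sum.reindex_bij_betw[OF bij_betw_extend_map[OF ab R' ij], of h] unfolding Q_def ZS_def by simp
  also have "\<dots> = (\<Sum>z\<in>ZS. edge_factor_left m E e X z i * edge_factor_right m E e X z j)"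
  proof (rule sum.cong[OF refl])
    fix z assume z: "z \<in> ZS"
    then have "extend_map m a b z i j \<in> inj_maps m N"
      using extend_map_in_inj_maps_iff[OF ab R' _ ij] unfolding ZS_def by blast
    then show "h (extend_map m a b z i j) = edge_factor_left m E e X z i * edge_factor_right m E e X z j"
      using prod_other_edges_eq_edge_factors[OF E e R_def _ _ _ _ X01] z
      unfolding h_def ZS_def a_def b_def by blast
  qed
  also have "\<dots> = (\<Sum>z\<in>PiE R (\<lambda>_. {..<N}). if inj_on z R \<and> i \<notin> z ` R \<and> j \<notin> z ` R
      then edge_factor_left m E e X z i * edge_factor_right m E e X z j else 0)"
    using finite_PiE[of R "\<lambda>_. {..<N}"] unfolding ZS_def R_def by (simp add: sum.inter_filter)
  also have "\<dots> = edge_embedding_sum m E e X N i j"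
    unfolding edge_embedding_sum_def R_def
    by (intro sum.cong) (auto simp: edge_factor_left_def edge_factor_right_def)
  finally show ?thesis unfolding a_def b_def h_def .
qed

lemma tdens_upd_diff:
  fixes X :: "nat set \<Rightarrow> real"
  assumes E: "E \<subseteq> pairs m" and ij: "i < N" "j < N" "i \<noteq> j"
    and X01: "\<forall>f\<in>pairs N. 0 \<le> X f \<and> X f \<le> 1"
  shows "tdens m E N (X({i, j} := 1)) - tdens m E N (X({i, j} := 0))
     = (1 / (\<Prod>r<m. real N - real r)) *
       (\<Sum>e\<in>E. edge_embedding_sum m E e X N i j + edge_embedding_sum m E e X N j i)"
proof -
  let ?h = "\<lambda>q f. (\<Prod>f'\<in>E - {f}. X (q ` f'))"
  have split: "(if q ` f = {i, j} then ?h q f else 0)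
      = (if q (Min f) = i \<and> q (Max f) = j then ?h q f else 0)
        + (if q (Min f) = j \<and> q (Max f) = i then ?h q f else 0)" if "f \<in> E" for q f
  proof -
    have "f = {Min f, Max f}" using pairs_Min_Max(3)[of f m] that E by blast
    then have "q ` f = {q (Min f), q (Max f)}" by (metis image_empty image_insert)
    then show ?thesis using ij by (auto simp: doubleton_eq_iff)
  qed
  have "tdens m E N (X({i, j} := 1)) - tdens m E N (X({i, j} := 0))
      = (1 / (\<Prod>r<m. real N - real r)) *
        (\<Sum>q\<in>inj_maps m N. (\<Prod>f\<in>E. (X({i, j} := 1)) (q ` f)) - (\<Prod>f\<in>E. (X({i, j} := 0)) (q ` f)))"
    unfolding tdens_def by (simp add: sum_subtractf right_diff_distrib)
  also have "(\<Sum>q\<in>inj_maps m N. (\<Prod>f\<in>E. (X({i, j} := 1)) (q ` f)) - (\<Prod>f\<in>E. (X({i, j} := 0)) (q ` f)))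
      = (\<Sum>q\<in>inj_maps m N. \<Sum>f\<in>E. if q ` f = {i, j} then ?h q f else 0)"
    by (intro sum.cong refl prod_upd_one_minus_prod_upd_zero[OF _ E])
  also have "\<dots> = (\<Sum>f\<in>E. \<Sum>q\<in>inj_maps m N. if q ` f = {i, j} then ?h q f else 0)"
    by (rule sum.swap)
  also have "\<dots> = (\<Sum>f\<in>E. edge_embedding_sum m E f X N i j + edge_embedding_sum m E f X N j i)"
    using sum_inj_maps_edge_to_eq[OF E _ ij X01] sum_inj_maps_edge_to_eq[OF E _ ij(2,1) ij(3)[symmetric] X01]
    by (intro sum.cong refl) (simp add: split sum.distrib)
  finally show ?thesis .
qed

definition edge_weight :: "nat \<Rightarrow> real \<Rightarrow> nat \<Rightarrow> real" where
  "edge_weight N b m = real N * (real N - 1) / 2 * b / (\<Prod>r<m. real N - real r)"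

lemma pderiv_fsub_eq_sum_edges:
  fixes X :: "nat set \<Rightarrow> real"
  assumes G: "\<forall>k<L. simple_graph (m k) (E k)" and ij: "i < N" "j < N" "i \<noteq> j"
    and X01: "\<forall>f\<in>pairs N. 0 \<le> X f \<and> X f \<le> 1"
  shows "pderiv_e (fsub L m E \<beta> N) {i, j} X = (\<Sum>k<L. \<Sum>e\<in>E k. edge_weight N (\<beta> k) (m k) *
      (edge_embedding_sum (m k) (E k) e X N i j + edge_embedding_sum (m k) (E k) e X N j i))"
proof -
  have "pderiv_e (fsub L m E \<beta> N) {i, j} X = (\<Sum>k<L. real N * (real N - 1) / 2 * \<beta> k *
      (tdens (m k) (E k) N (X({i, j} := 1)) - tdens (m k) (E k) N (X({i, j} := 0))))"
  proof -
    have "(c * (\<Sum>k<L. b k * u k) - c * (\<Sum>k<L. b k * v k)) / 2 = (\<Sum>k<L. c / 2 * b k * (u k - v k))"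
      for c :: real and b u v :: "nat \<Rightarrow> real"
      by (simp add: sum_subtractf[symmetric] right_diff_distrib[symmetric] sum_distrib_left
          sum_divide_distrib mult.assoc)
    then show ?thesis unfolding pderiv_e_def fsub_def .
  qed
  also have "\<dots> = (\<Sum>k<L. \<Sum>e\<in>E k. edge_weight N (\<beta> k) (m k) *
      (edge_embedding_sum (m k) (E k) e X N i j + edge_embedding_sum (m k) (E k) e X N j i))"
    using G tdens_upd_diff[OF _ ij X01] unfolding simple_graph_def edge_weight_def
    by (intro sum.cong refl) (simp add: sum_distrib_left)
  finally show ?thesis .
qed

text \<open>The normalisation of the density by the falling factorial \<open>(N)\<^sub>m\<close> compensates the
  \<open>N\<^sup>m\<^sup>-\<^sup>2\<close> placements of the vertices outside an edge, uniformly in \<open>N\<close>.\<close>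
lemma falling_factorial_ratio_le:
  assumes m2: "2 \<le> m"
  shows "real N ^ (m - 2) * (real N * (real N - 1)) * \<bar>1 / (\<Prod>r<m. real N - real r)\<bar> \<le> real m ^ m"
proof (cases "N < m")
  case True
  then have "(\<Prod>r<m. real N - real r) = 0" by (intro prod_zero) auto
  then show ?thesis by (simp only:) simp
next
  case False
  define P where "P = (\<Prod>r<m. real N - real r)"
  have P0: "P > 0" unfolding P_def using False by (intro prod_pos) auto
  have "real N ^ (m - 2) * (real N * (real N - 1)) \<le> real N ^ (m - 2) * (real N * real N)"
    by (intro mult_left_mono) auto
  also have "\<dots> = real N ^ m" using m2 by (metis le_add_diff_inverse2 power2_eq_square power_add)
  also have "\<dots> = (\<Prod>r<m. real N)" by simp
  also have "\<dots> \<le> (\<Prod>r<m. real m * (real N - real r))"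
  proof (rule prod_mono)
    fix r assume "r \<in> {..<m}"
    then have "real m * real r \<le> real m * (real m - 1)" "(real m - 1) * real m \<le> (real m - 1) * real N"
      using False m2 by (auto intro!: mult_left_mono)
    then show "0 \<le> real N \<and> real N \<le> real m * (real N - real r)" by (simp add: algebra_simps)
  qed
  also have "\<dots> = real m ^ m * P" unfolding P_def by (simp add: prod.distrib)
  finally show ?thesis using P0 unfolding P_def[symmetric] by (simp add: divide_le_eq mult.commute)
qed

definition rank_one_weight :: "nat \<Rightarrow> (nat \<Rightarrow> nat) \<Rightarrow> (nat \<Rightarrow> nat set set) \<Rightarrow> (nat \<Rightarrow> real) \<Rightarrow> real" where
  "rank_one_weight L m E \<beta> = (\<Sum>k<L. \<bar>\<beta> k\<bar> * real (card (E k)) * real (m k) ^ m k)"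

lemma edge_weight_count_le:
  assumes e: "e \<in> pairs m" and N: "2 \<le> N"
  shows "2 * (real (card (PiE ({..<m} - e) (\<lambda>_. {..<N}))) * \<bar>edge_weight N b m\<bar>) \<le> \<bar>b\<bar> * real m ^ m"
proof -
  have m2: "2 \<le> m" using e by (auto elim!: pairsE)
  have "card ({..<m} - e) = m - 2"
    using card_pairs_elem[OF e] pairs_subset_lessThan[OF e] by (simp add: card_Diff_subset finite_subset)
  then have "2 * (real (card (PiE ({..<m} - e) (\<lambda>_. {..<N}))) * \<bar>edge_weight N b m\<bar>)
      = \<bar>b\<bar> * (real N ^ (m - 2) * (real N * (real N - 1)) * \<bar>1 / (\<Prod>r<m. real N - real r)\<bar>)"
    unfolding edge_weight_def using N by (simp add: card_PiE abs_mult abs_divide)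
  also have "\<dots> \<le> \<bar>b\<bar> * real m ^ m"
    using falling_factorial_ratio_le[OF m2] by (intro mult_left_mono) auto
  finally show ?thesis .
qed

lemma sum_Sigma3:
  assumes "finite K" "\<forall>k\<in>K. finite (A k)" "finite U" "\<forall>k e u. finite (C k e u)"
  shows "(\<Sum>x\<in>(SIGMA k:K. SIGMA e:A k. SIGMA u:U. C k e u). F x)
    = (\<Sum>k\<in>K. \<Sum>e\<in>A k. \<Sum>u\<in>U. \<Sum>z\<in>C k e u. F (k, e, u, z))"
  using assms by (simp add: sum.Sigma finite_SigmaI split_def)

text \<open>The discrete gradient of \<open>f\<close> is a sum of rank-one matrices \<open>w\<^sub>z a(i, z) g(j, z)\<close> with
  bounded factors and total weight independent of \<open>N\<close>; the index \<open>z\<close> runs over a graph \<open>k\<close>, an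
  edge \<open>e\<close> of it, an orientation of \<open>e\<close> and a placement of the other vertices.\<close>
lemma pderiv_fsub_rank_one_repr:
  fixes X :: "nat set \<Rightarrow> real"
  assumes G: "\<forall>k<L. simple_graph (m k) (E k)" and N: "2 \<le> N"
    and X01: "\<forall>f\<in>pairs N. 0 \<le> X f \<and> X f \<le> 1"
  obtains Z :: "(nat \<times> nat set \<times> bool \<times> (nat \<Rightarrow> nat)) set" and w a g
  where "finite Z" "\<forall>i z. \<bar>a i z\<bar> \<le> 1 \<and> \<bar>g i z\<bar> \<le> 1" "(\<Sum>z\<in>Z. \<bar>w z\<bar>) \<le> rank_one_weight L m E \<beta>"
    "\<forall>i<N. \<forall>j<N. i \<noteq> j \<longrightarrow> pderiv_e (fsub L m E \<beta> N) {i, j} X = (\<Sum>z\<in>Z. w z * a i z * g j z)"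
proof -
  define PZ where "PZ k e = PiE ({..<m k} - e) (\<lambda>_. {..<N})" for k e
  define Z where "Z = (SIGMA k:{..<L}. SIGMA e:E k. SIGMA ob:(UNIV::bool set). PZ k e)"
  define w where "w x = edge_weight N (\<beta> (fst x)) (m (fst x))" for x :: "nat \<times> nat set \<times> bool \<times> (nat \<Rightarrow> nat)"
  define a where "a i x = (case x of (k, e, ob, z) \<Rightarrow>
    if ob then edge_factor_left (m k) (E k) e X z i else edge_factor_right (m k) (E k) e X z i)"
    for i and x :: "nat \<times> nat set \<times> bool \<times> (nat \<Rightarrow> nat)"
  define g where "g i x = (case x of (k, e, ob, z) \<Rightarrow>
    if ob then edge_factor_right (m k) (E k) e X z i else edge_factor_left (m k) (E k) e X z i)"
    for i and x :: "nat \<times> nat set \<times> bool \<times> (nat \<Rightarrow> nat)"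
  have Ek: "E k \<subseteq> pairs (m k)" "finite (E k)" if "k < L" for k
    using G that finite_pairs finite_subset unfolding simple_graph_def by blast+
  have fPZ: "finite (PZ k e)" for k e unfolding PZ_def by (intro finite_PiE) auto
  have sumZ: "(\<Sum>x\<in>Z. F x) = (\<Sum>k<L. \<Sum>e\<in>E k. \<Sum>ob\<in>UNIV. \<Sum>z\<in>PZ k e. F (k, e, ob, z))" for F
    unfolding Z_def using Ek fPZ by (intro sum_Sigma3) auto
  have "finite Z" unfolding Z_def using Ek fPZ by (intro finite_SigmaI) auto
  moreover have "\<forall>i z. \<bar>a i z\<bar> \<le> 1 \<and> \<bar>g i z\<bar> \<le> 1"
    unfolding a_def g_def by (auto simp: abs_edge_factor_left_le abs_edge_factor_right_le split: prod.splits)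
  moreover have "(\<Sum>z\<in>Z. \<bar>w z\<bar>) \<le> rank_one_weight L m E \<beta>"
  proof -
    have "(\<Sum>z\<in>Z. \<bar>w z\<bar>) = (\<Sum>k<L. \<Sum>e\<in>E k. 2 * (real (card (PZ k e)) * \<bar>edge_weight N (\<beta> k) (m k)\<bar>))"
      unfolding sumZ w_def by (simp add: UNIV_bool)
    also have "\<dots> \<le> (\<Sum>k<L. \<Sum>e\<in>E k. \<bar>\<beta> k\<bar> * real (m k) ^ m k)"
      using Ek edge_weight_count_le[OF _ N] unfolding PZ_def by (intro sum_mono) blast
    finally show ?thesis unfolding rank_one_weight_def by (simp add: mult.commute mult.left_commute)
  qed
  moreover have "\<forall>i<N. \<forall>j<N. i \<noteq> j \<longrightarrow> pderiv_e (fsub L m E \<beta> N) {i, j} X = (\<Sum>z\<in>Z. w z * a i z * g j z)"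
  proof (intro allI impI)
    fix i j assume ij: "i < N" "j < N" "i \<noteq> j"
    show "pderiv_e (fsub L m E \<beta> N) {i, j} X = (\<Sum>z\<in>Z. w z * a i z * g j z)"
      unfolding pderiv_fsub_eq_sum_edges[OF G ij X01] sumZ
      by (simp add: UNIV_bool w_def a_def g_def edge_embedding_sum_def PZ_def sum_distrib_left
          distrib_left mult.commute mult.left_commute add.commute)
  qed
  ultimately show ?thesis by (rule that)
qed

lemma Xf_near_block_matrix:
  assumes G: "\<forall>i<L. simple_graph (m i) (E i)" and \<delta>: "0 < \<delta>" and N: "2 \<le> N"
    and X: "X \<in> Xf L m E \<beta> N"
  defines "B \<equiv> rank_one_weight L m E \<beta>"
  shows "\<exists>Xs. block_matrix N (card (profiles (sample_size B \<delta>) (grid_size B \<delta>))) Xs \<and>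
    dist1 N X Xs \<le> \<delta> * real (N choose 2) + 5000 * Cbeta L E \<beta> ^ 2 * real (N choose 2) powr (15/16)"
proof -
  let ?h = "\<lambda>e. pderiv_e (fsub L m E \<beta> N) e X"
  have X01: "\<forall>e\<in>pairs N. 0 \<le> X e \<and> X e \<le> 1"
    and X_fixed: "(\<Sum>e\<in>pairs N. \<bar>X e - (1 + tanh (?h e)) / 2\<bar>)
      \<le> 5000 * Cbeta L E \<beta> ^ 2 * real (N choose 2) powr (15/16)"
    using X unfolding Xf_def by auto
  obtain Z :: "(nat \<times> nat set \<times> bool \<times> (nat \<Rightarrow> nat)) set" and w a g
    where Z: "finite Z" "\<forall>i z. \<bar>a i z\<bar> \<le> 1 \<and> \<bar>g i z\<bar> \<le> 1" "(\<Sum>z\<in>Z. \<bar>w z\<bar>) \<le> B"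
    and repr: "\<forall>i<N. \<forall>j<N. i \<noteq> j \<longrightarrow> ?h {i, j} = (\<Sum>z\<in>Z. w z * a i z * g j z)"
    unfolding B_def by (rule pderiv_fsub_rank_one_repr[OF G N X01])
  obtain \<kappa> G where \<kappa>: "\<forall>i<N. \<kappa> i \<in> profiles (sample_size B \<delta>) (grid_size B \<delta>)"
    and err: "(\<Sum>i<N. \<Sum>j<N. \<bar>(\<Sum>z\<in>Z. w z * a i z * g j z) - G (\<kappa> i) (\<kappa> j)\<bar>) \<le> real N ^ 2 * \<delta>"
    using exists_profile_approx[OF \<delta> Z, of N] by blast
  let ?Xs = "\<lambda>i j. (1 + tanh ((G (\<kappa> i) (\<kappa> j) + G (\<kappa> j) (\<kappa> i)) / 2)) / 2"
  have "(\<Sum>i<N. \<Sum>j<N. \<bar>(\<Sum>z\<in>Z. w z * a i z * g j z) - G (\<kappa> i) (\<kappa> j)\<bar>) / 4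
      \<le> real N ^ 2 * \<delta> / 4"
    using err by linarith
  also have "\<dots> = \<delta> * (real N ^ 2 / 4)" by simp
  also have "\<dots> \<le> \<delta> * real (N choose 2)"
    using sq_div_four_le_choose_two[OF N] \<delta> by (intro mult_left_mono) auto
  finally have "dist1 N X ?Xs \<le> \<delta> * real (N choose 2)
      + 5000 * Cbeta L E \<beta> ^ 2 * real (N choose 2) powr (15/16)"
    using dist1_mean_field_le[OF repr, of X G \<kappa>] X_fixed by linarith
  moreover have "block_matrix N (card (profiles (sample_size B \<delta>) (grid_size B \<delta>))) ?Xs"
    by (rule block_matrix_of_labelling[OF finite_profiles \<kappa>]) (simp add: add.commute)
  ultimately show ?thesis by blast
qed

theorem theorem14:
  fixes L :: nat and m :: "nat \<Rightarrow> nat" and E :: "nat \<Rightarrow> nat set set"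
    and \<beta> :: "nat \<Rightarrow> real" and \<delta> :: real
  assumes "\<forall>i<L. simple_graph (m i) (E i)"
    and "0 < \<delta>" and "\<delta> < 1"
  shows "\<exists>C::real. C > 0 \<and>
    (\<forall>N\<ge>2. \<forall>X\<in>Xf L m E \<beta> N.
       \<exists>k Xs. real k \<le> C \<and> block_matrix N k Xs \<and>
         dist1 N X Xs \<le> \<delta> * real (N choose 2)
            + 5000 * Cbeta L E \<beta> ^ 2 * real (N choose 2) powr (15/16))"
proof -
  let ?C = "card (profiles (sample_size (rank_one_weight L m E \<beta>) \<delta>) (grid_size (rank_one_weight L m E \<beta>) \<delta>))"
  show ?thesis
  proof (rule exI[of _ "real ?C"], intro conjI allI impI ballI)
    show "real ?C > 0" by (simp add: card_profiles)
    fix N X assume "2 \<le> N" "X \<in> Xf L m E \<beta> N"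
    then show "\<exists>k Xs. real k \<le> real ?C \<and> block_matrix N k Xs \<and>
        dist1 N X Xs \<le> \<delta> * real (N choose 2) + 5000 * Cbeta L E \<beta> ^ 2 * real (N choose 2) powr (15/16)"
      using Xf_near_block_matrix[OF assms(1,2)] by blast
  qed
qed

end
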